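(* Let $c\in\mathbb{R}$ and let $\gamma:(c,\infty)\to\mathbb{R}$ be a three times differentiable function such that $$\gamma\ge0,\quad\gamma'\le0,\quad\gamma''\ge0,\quad\gamma'''\le0$$ on $(c,\infty)$. Then the function $f:(-e^{-c},e^{-c})^2\to\mathbb{R}$ given by $$f(x,y)=\begin{cases} -\gamma(\log\frac1x)\cdot(2y-x)-\gamma'(\log\frac1x)\cdot\frac{1}{2x}(x-y)(2x-y), & e^{-c}>x\ge|y|,\ x\ne0,\\ -\gamma(\log(-\frac1x))\cdot(2x-y)-\gamma'(\log(-\frac1x))\cdot\frac32(y-x), & -e^{-c}<x\le-|y|,\ x\ne0,\\ 0, & x=y=0,\\ f(y,x), & \text{in the remaining cases (i.e. } |y|>|x|), \end{cases}$$ is separately convex.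
   Context: A function $f$ defined on an open set $U\subset\mathbb{R}^2$ is called separately convex if it is convex on every line segment contained in $U$ that is parallel to a coordinate axis. *)

theory Defs
  imports "HOL-Analysis.Analysis"
begin

definition separately_convex_on :: "(real \<times> real) set \<Rightarrow> (real \<times> real \<Rightarrow> real) \<Rightarrow> bool" where
  "separately_convex_on U f \<longleftrightarrow>
     (\<forall>a b. closed_segment a b \<subseteq> U \<and> (fst a = fst b \<or> snd a = snd b)
            \<longrightarrow> convex_on (closed_segment a b) f)"

text \<open>The first three cases of the definition of f (with g1 the derivative of g).\<close>
definition f_base :: "(real \<Rightarrow> real) \<Rightarrow> (real \<Rightarrow> real) \<Rightarrow> real \<times> real \<Rightarrow> real" where
  "f_base g g1 p = (let x = fst p; y = snd p in
     if x \<noteq> 0 \<and> x \<ge> \<bar>y\<bar> then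
        - g (ln (1/x)) * (2*y - x) - g1 (ln (1/x)) * (1/(2*x)) * (x - y) * (2*x - y)
     else if x \<noteq> 0 \<and> x \<le> - \<bar>y\<bar> then
        - g (ln (-(1/x))) * (2*x - y) - g1 (ln (-(1/x))) * (3/2) * (y - x)
     else 0)"

definition f_sep :: "(real \<Rightarrow> real) \<Rightarrow> (real \<Rightarrow> real) \<Rightarrow> real \<times> real \<Rightarrow> real" where
  "f_sep g g1 p = (if \<bar>snd p\<bar> > \<bar>fst p\<bar> then f_base g g1 (snd p, fst p) else f_base g g1 p)"

end

theory Submission
  imports Defs
begin

text \<open>By the symmetry f(x, y) = f(y, x) it suffices to show that every vertical section
  h(y) = f(a, y) is convex. For a \<noteq> 0, h is smooth on each of y \<le> -|a|, |y| \<le> |a| and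
  y \<ge> |a|; on each piece the sign conditions on g, g1, g2, g3 make h'' \<ge> 0, and at the
  junctions \<plusminus>|a| the one-sided derivatives jump upwards, so the pieces glue to a convex
  function. For a = 0, h(y) = y (g - g1)(log 1/y) for y > 0 and
  h(y) = -y (2 g - 3/2 g1)(log (-1/y)) for y < 0. Both halves are convex, and since
  g - g1 and 2 g - 3/2 g1 are nonincreasing, h(t y) \<le> t h(y) for 0 < t < 1; together
  with h \<ge> 0 = h(0) this makes h convex across 0.\<close>

lemma convex_on_eq:
  assumes "convex_on S f" and "\<And>x. x \<in> S \<Longrightarrow> f x = g x"
  shows "convex_on S g"
  using assms by (auto simp: convex_on_def convex_def)

lemma convex_on_insert:
  assumes f: "convex_on S f" and conv: "convex (insert a S)"
    and a: "\<And>z t. z \<in> S \<Longrightarrow> 0 < t \<Longrightarrow> t < 1 \<Longrightarrow>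
              f ((1 - t) *\<^sub>R a + t *\<^sub>R z) \<le> (1 - t) * f a + t * f z"
  shows "convex_on (insert a S) f"
proof (rule convex_onI[OF _ conv])
  fix t :: real and x y
  assume t: "0 < t" "t < 1" and x: "x \<in> insert a S" and y: "y \<in> insert a S"
  show "f ((1 - t) *\<^sub>R x + t *\<^sub>R y) \<le> (1 - t) * f x + t * f y"
  proof (cases "x = a \<or> y = a")
    case True
    moreover have "f ((1 - (1 - t)) *\<^sub>R a + (1 - t) *\<^sub>R x) \<le> (1 - (1 - t)) * f a + (1 - t) * f x"
      if "x \<in> S" using a[OF that, of "1 - t"] t by simp
    ultimately show ?thesis
      using a[of y t] t x y by (auto simp: add.commute simp flip: scaleR_add_left distrib_right)
  next
    case False
    then show ?thesis using convex_onD[OF f, of t x y] t x y by auto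
  qed
qed

lemma convex_on_singleton_Times:
  assumes "convex_on S (\<lambda>y. f (x, y))"
  shows "convex_on ({x} \<times> S) f"
  using assms by (auto simp: convex_on_def convex_Times simp flip: scaleR_add_left)

lemma convex_on_Times_singleton:
  assumes "convex_on S (\<lambda>x. f (x, y))"
  shows "convex_on (S \<times> {y}) f"
  using assms by (auto simp: convex_on_def convex_Times simp flip: scaleR_add_left)

lemma convex_on_glue_supporting_line:
  fixes f :: "real \<Rightarrow> real"
  assumes I: "convex I" and q: "q \<in> I"
    and left: "convex_on (I \<inter> {..q}) f" and right: "convex_on (I \<inter> {q..}) f"
    and support: "\<And>x. x \<in> I \<Longrightarrow> f q + m * (x - q) \<le> f x"
  shows "convex_on I f"
proof (rule convex_on_linorderI[OF _ I])
  fix t x y :: real assume t: "0 < t" "t < 1" and x: "x \<in> I" and y: "y \<in> I" and xy: "x < y"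
  define w where "w = (1 - t) * x + t * y"
  define s where "s = (f y - f x) / (y - x)"
  have "0 < t * (y - x)" "0 < (1 - t) * (y - x)"
    using t xy by simp_all
  then have w: "x < w" "w < y"
    by (simp_all add: w_def algebra_simps)
  have chord: "(1 - t) * f x + t * f y = f x + s * (w - x)"
    using xy by (simp add: s_def w_def field_simps)
  have "f w \<le> f x + s * (w - x)"
  proof -
    consider "y \<le> q" | "q \<le> x" | "x < q" "q < y" by linarith
    then show ?thesis
    proof cases
      case 1
      then show ?thesis using convex_onD[OF left, of t x y] t x y xy chord by (simp add: w_def)
    next
      case 2
      then show ?thesis using convex_onD[OF right, of t x y] t x y xy chord by (simp add: w_def)
    next
      case 3
      have Icc: "{x..q} \<subseteq> I \<inter> {..q}" "{q..y} \<subseteq> I \<inter> {q..}"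
        using connected_contains_Icc[OF convex_connected[OF I]] x y q by auto
      text \<open>Weighting the supporting line at x and y puts f q below the chord.\<close>
      have "(y - x) * f q \<le> (y - q) * f x + (q - x) * f y"
        using mult_left_mono[OF support[OF x], of "y - q"]
          mult_left_mono[OF support[OF y], of "q - x"] 3
        by (simp add: algebra_simps)
      then have fq: "f q \<le> f x + s * (q - x)"
        using xy by (simp add: s_def field_simps)
      show ?thesis
      proof (cases "w \<le> q")
        case True
        have slope: "(f q - f x) / (q - x) \<le> s"
          using fq 3 by (simp add: field_simps)
        have "f w \<le> (f q - f x) / (q - x) * (w - x) + f x"
          using convex_onD_Icc'[OF convex_on_subset[OF left Icc(1)], of w] True w by simp
        also have "\<dots> \<le> f x + s * (w - x)"
          using mult_right_mono[OF slope, of "w - x"] w by simp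
        finally show ?thesis .
      next
        case False
        have fy: "f y = f x + s * (y - x)"
          using xy by (simp add: s_def)
        have slope: "(f q - f y) / (y - q) \<le> - s"
          using fq fy 3 by (simp add: field_simps)
        have "f w \<le> (f q - f y) / (y - q) * (y - w) + f y"
          using convex_onD_Icc''[OF convex_on_subset[OF right Icc(2)], of w] False w by simp
        also have "\<dots> \<le> - s * (y - w) + f y"
          using mult_right_mono[OF slope, of "y - w"] w by simp
        also have "\<dots> = f x + s * (w - x)"
          using fy by (simp add: algebra_simps)
        finally show ?thesis .
      qed
    qed
  qed
  then show "f ((1 - t) *\<^sub>R x + t *\<^sub>R y) \<le> (1 - t) * f x + t * f y"
    using chord by (simp add: w_def)
qed

lemma convex_on_above_tangent_at_right:
  fixes f :: "real \<Rightarrow> real"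
  assumes convex: "convex_on {q..x} f" and qx: "q < x"
    and deriv: "(f has_real_derivative d) (at_right q)"
  shows "f q + d * (x - q) \<le> f x"
proof -
  have lim: "((\<lambda>y. (f y - f q) / (y - q)) \<longlongrightarrow> d) (at_right q)"
    using deriv unfolding has_field_derivative_iff .
  have "eventually (\<lambda>y. (f y - f q) / (y - q) \<le> (f x - f q) / (x - q)) (at_right q)"
    using eventually_at_right_real[OF qx]
  proof eventually_elim
    fix y assume y: "y \<in> {q<..<x}"
    have "f y \<le> (f x - f q) / (x - q) * (y - q) + f q"
      using convex_onD_Icc'[OF convex, of y] y by simp
    then show "(f y - f q) / (y - q) \<le> (f x - f q) / (x - q)"
      using y by (simp add: field_split_simps)
  qed
  then have "d \<le> (f x - f q) / (x - q)"
    by (rule tendsto_upperbound[OF lim]) simp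
  then show ?thesis
    using qx by (simp add: field_simps)
qed

lemma convex_on_above_tangent_at_left:
  fixes f :: "real \<Rightarrow> real"
  assumes convex: "convex_on {x..q} f" and xq: "x < q"
    and deriv: "(f has_real_derivative d) (at_left q)"
  shows "f q + d * (x - q) \<le> f x"
proof -
  have lim: "((\<lambda>y. (f y - f q) / (y - q)) \<longlongrightarrow> d) (at_left q)"
    using deriv unfolding has_field_derivative_iff .
  have "eventually (\<lambda>y. (f x - f q) / (x - q) \<le> (f y - f q) / (y - q)) (at_left q)"
    using eventually_at_left_real[OF xq]
  proof eventually_elim
    fix y assume y: "y \<in> {x<..<q}"
    have "f y \<le> (f x - f q) / (q - x) * (q - y) + f q"
      using convex_onD_Icc''[OF convex, of y] y by simp
    then show "(f x - f q) / (x - q) \<le> (f y - f q) / (y - q)"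
      using y by (simp add: field_split_simps)
  qed
  then have "(f x - f q) / (x - q) \<le> d"
    by (rule tendsto_lowerbound[OF lim]) simp
  then show ?thesis
    using xq by (simp add: field_simps)
qed

lemma convex_on_glue_one_sided_derivatives:
  fixes f :: "real \<Rightarrow> real"
  assumes I: "convex I" and q: "q \<in> I"
    and left: "convex_on (I \<inter> {..q}) f" and right: "convex_on (I \<inter> {q..}) f"
    and dl: "(f has_real_derivative dl) (at_left q)"
    and dr: "(f has_real_derivative dr) (at_right q)"
    and jump: "dl \<le> dr"
  shows "convex_on I f"
proof (rule convex_on_glue_supporting_line[OF I q left right])
  fix x assume x: "x \<in> I"
  have Icc: "{x..q} \<subseteq> I \<inter> {..q}" "{q..x} \<subseteq> I \<inter> {q..}"
    using connected_contains_Icc[OF convex_connected[OF I]] x q by auto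
  consider "x = q" | "q < x" | "x < q" by linarith
  then show "f q + dr * (x - q) \<le> f x"
  proof cases
    case 2
    then show ?thesis
      using convex_on_above_tangent_at_right[OF convex_on_subset[OF right Icc(2)] _ dr] by simp
  next
    case 3
    have "dr * (x - q) \<le> dl * (x - q)"
      using jump 3 by (simp add: mult_right_mono_neg)
    then show ?thesis
      using convex_on_above_tangent_at_left[OF convex_on_subset[OF left Icc(1)] 3 dl] by simp
  qed simp
qed

lemma DERIV_at_left_transform:
  assumes "(F has_real_derivative D) (at q)" and "p < q"
    and "\<And>x. p \<le> x \<Longrightarrow> x \<le> q \<Longrightarrow> f x = F x"
  shows "(f has_real_derivative D) (at_left q)"
proof -
  have "(f has_real_derivative D) (at q within {p..q})"
    using has_field_derivative_at_within[OF assms(1)]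
    by (rule has_field_derivative_transform_within[where d=1]) (use assms in auto)
  then show ?thesis
    using at_within_Icc_at_left[OF \<open>p < q\<close>] by simp
qed

lemma DERIV_at_right_transform:
  assumes "(F has_real_derivative D) (at q)" and "q < p"
    and "\<And>x. q \<le> x \<Longrightarrow> x \<le> p \<Longrightarrow> f x = F x"
  shows "(f has_real_derivative D) (at_right q)"
proof -
  have "(f has_real_derivative D) (at q within {q..p})"
    using has_field_derivative_at_within[OF assms(1)]
    by (rule has_field_derivative_transform_within[where d=1]) (use assms in auto)
  then show ?thesis
    using at_within_Icc_at_right[OF \<open>q < p\<close>] by simp
qed

lemma DERIV_comp_ln_inverse:
  assumes "(F has_real_derivative D) (at (ln (1 / y)))" and "0 < y"
  shows "((\<lambda>y. F (ln (1 / y))) has_real_derivative - D / y) (at y)"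
proof -
  have "((\<lambda>y. ln (1 / y)) has_real_derivative - 1 / y) (at y)"
    using \<open>0 < y\<close> by (auto intro!: derivative_eq_intros simp: field_simps)
  from DERIV_chain2[OF assms(1) this] show ?thesis by simp
qed

lemma DERIV_comp_ln_minus_inverse:
  assumes "(F has_real_derivative D) (at (ln (- (1 / y))))" and "y < 0"
  shows "((\<lambda>y. F (ln (- (1 / y)))) has_real_derivative - D / y) (at y)"
proof -
  have "((\<lambda>y. ln (- (1 / y))) has_real_derivative - 1 / y) (at y)"
    using \<open>y < 0\<close> by (auto intro!: derivative_eq_intros simp: field_simps)
  from DERIV_chain2[OF assms(1) this] show ?thesis by simp
qed

lemma separately_convex_onI:
  assumes vertical: "\<And>x. x \<in> A \<Longrightarrow> convex_on B (\<lambda>y. f (x, y))"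
    and horizontal: "\<And>y. y \<in> B \<Longrightarrow> convex_on A (\<lambda>x. f (x, y))"
  shows "separately_convex_on (A \<times> B) f"
  unfolding separately_convex_on_def
proof (intro allI impI, elim conjE disjE)
  fix p q :: "real \<times> real"
  assume seg: "closed_segment p q \<subseteq> A \<times> B"
  then have ends: "fst p \<in> A" "snd p \<in> B"
    using ends_in_segment(1)[of p q] by auto
  show "convex_on (closed_segment p q) f" if "fst p = fst q"
  proof -
    have eq: "closed_segment p q = {fst p} \<times> closed_segment (snd p) (snd q)"
      using closed_segment_same_fst[OF that] .
    then have "closed_segment (snd p) (snd q) \<subseteq> B"
      using seg by auto
    then show ?thesis
      unfolding eq
      by (intro convex_on_singleton_Times convex_on_subset[OF vertical[OF ends(1)]]) auto
  qed
  show "convex_on (closed_segment p q) f" if "snd p = snd q"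
  proof -
    have eq: "closed_segment p q = closed_segment (fst p) (fst q) \<times> {snd p}"
      using closed_segment_same_snd[OF that] .
    then have "closed_segment (fst p) (fst q) \<subseteq> A"
      using seg by auto
    then show ?thesis
      unfolding eq
      by (intro convex_on_Times_singleton convex_on_subset[OF horizontal[OF ends(2)]]) auto
  qed
qed

lemma f_base_antidiagonal: "f_base g g1 (x, - x) = f_base g g1 (- x, x)"
  by (cases x "0 :: real" rule: linorder_cases) (simp_all add: f_base_def field_simps)

lemma f_sep_commute: "f_sep g g1 (x, y) = f_sep g g1 (y, x)"
proof -
  consider "\<bar>x\<bar> \<noteq> \<bar>y\<bar>" | "y = x" | "y = - x"
    by linarith
  then show ?thesis
    by cases (auto simp: f_sep_def f_base_antidiagonal)
qed

locale alternating_derivatives =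
  fixes c :: real and g g1 g2 g3 :: "real \<Rightarrow> real"
  assumes g_deriv: "\<And>t. c < t \<Longrightarrow> (g has_real_derivative g1 t) (at t)"
    and g1_deriv: "\<And>t. c < t \<Longrightarrow> (g1 has_real_derivative g2 t) (at t)"
    and g2_deriv: "\<And>t. c < t \<Longrightarrow> (g2 has_real_derivative g3 t) (at t)"
    and g_nonneg: "\<And>t. c < t \<Longrightarrow> 0 \<le> g t"
    and g1_nonpos: "\<And>t. c < t \<Longrightarrow> g1 t \<le> 0"
    and g2_nonneg: "\<And>t. c < t \<Longrightarrow> 0 \<le> g2 t"
    and g3_nonpos: "\<And>t. c < t \<Longrightarrow> g3 t \<le> 0"
begin

abbreviation R :: real where "R \<equiv> exp (- c)"

lemma c_less_ln_inverse: "0 < y \<Longrightarrow> y < R \<Longrightarrow> c < ln (1 / y)"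
  using ln_less_cancel_iff[of y R] by (simp add: ln_div)

lemma c_less_ln_minus_inverse: "y < 0 \<Longrightarrow> - R < y \<Longrightarrow> c < ln (- (1 / y))"
  using c_less_ln_inverse[of "- y"] by simp

text \<open>The three branches of the section y \<mapsto> f(a, y); the outer two are the first two
  cases of f with the arguments swapped.\<close>

definition f_upper :: "real \<Rightarrow> real \<Rightarrow> real" where
  "f_upper a y = - g (ln (1/y)) * (2*a - y) - g1 (ln (1/y)) * (1/(2*y)) * (y - a) * (2*y - a)"

definition f_lower :: "real \<Rightarrow> real \<Rightarrow> real" where
  "f_lower a y = - g (ln (-(1/y))) * (2*y - a) - g1 (ln (-(1/y))) * (3/2) * (a - y)"

definition f_middle :: "real \<Rightarrow> real \<Rightarrow> real" where
  "f_middle a y = (if 0 < a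
     then - g (ln (1/a)) * (2*y - a) - g1 (ln (1/a)) * (1/(2*a)) * (a - y) * (2*a - y)
     else - g (ln (-(1/a))) * (2*a - y) - g1 (ln (-(1/a))) * (3/2) * (y - a))"

definition f_upper' :: "real \<Rightarrow> real \<Rightarrow> real" where
  "f_upper' a y = g (ln (1/y)) - g1 (ln (1/y)) * (4*y^2 - 4*a*y - a^2) / (2*y^2)
     + g2 (ln (1/y)) * (y - a) * (2*y - a) / (2*y^2)"

definition f_upper'' :: "real \<Rightarrow> real \<Rightarrow> real" where
  "f_upper'' a y = (- 2 * g1 (ln (1/y)) * (y + a)^2 + g2 (ln (1/y)) * (y - a) * (4*y + 3*a)
     - g3 (ln (1/y)) * (y - a) * (2*y - a)) / (2*y^3)"

lemma f_upper_has_derivative: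
  assumes y: "0 < y" "y < R"
  shows "(f_upper a has_real_derivative f_upper' a y) (at y)"
proof -
  note L = c_less_ln_inverse[OF y]
  note G = DERIV_comp_ln_inverse[OF g_deriv[OF L] y(1)]
    and G1 = DERIV_comp_ln_inverse[OF g1_deriv[OF L] y(1)]
  have ne: "2 * y \<noteq> 0" using y by simp
  show ?thesis unfolding f_upper_def[abs_def] f_upper'_def
    by (rule derivative_eq_intros G G1 ne refl)+
      (use y in \<open>simp add: field_simps power2_eq_square\<close>)
qed

lemma f_upper'_has_derivative:
  assumes y: "0 < y" "y < R"
  shows "(f_upper' a has_real_derivative f_upper'' a y) (at y)"
proof -
  note L = c_less_ln_inverse[OF y]
  note G = DERIV_comp_ln_inverse[OF g_deriv[OF L] y(1)]
    and G1 = DERIV_comp_ln_inverse[OF g1_deriv[OF L] y(1)]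
    and G2 = DERIV_comp_ln_inverse[OF g2_deriv[OF L] y(1)]
  have ne: "2 * y^2 \<noteq> 0" using y by simp
  show ?thesis unfolding f_upper'_def[abs_def] f_upper''_def
    by (rule derivative_eq_intros G G1 G2 ne refl)+
      (use y in \<open>simp add: field_simps power2_eq_square power3_eq_cube\<close>)
qed

definition f_lower' :: "real \<Rightarrow> real \<Rightarrow> real" where
  "f_lower' a y = - 2 * g (ln (-(1/y))) + g1 (ln (-(1/y))) * (7*y - 2*a) / (2*y)
     + 3 * g2 (ln (-(1/y))) * (a - y) / (2*y)"

definition f_lower'' :: "real \<Rightarrow> real \<Rightarrow> real" where
  "f_lower'' a y = (2 * g1 (ln (-(1/y))) * (2*y + a) - g2 (ln (-(1/y))) * (7*y + a)
     - 3 * g3 (ln (-(1/y))) * (a - y)) / (2*y^2)"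

lemma f_lower_has_derivative:
  assumes y: "y < 0" "- R < y"
  shows "(f_lower a has_real_derivative f_lower' a y) (at y)"
proof -
  note L = c_less_ln_minus_inverse[OF y]
  note G = DERIV_comp_ln_minus_inverse[OF g_deriv[OF L] y(1)]
    and G1 = DERIV_comp_ln_minus_inverse[OF g1_deriv[OF L] y(1)]
  show ?thesis unfolding f_lower_def[abs_def] f_lower'_def
    by (rule derivative_eq_intros G G1 refl)+ (use y in \<open>simp add: field_simps\<close>)
qed

lemma f_lower'_has_derivative:
  assumes y: "y < 0" "- R < y"
  shows "(f_lower' a has_real_derivative f_lower'' a y) (at y)"
proof -
  note L = c_less_ln_minus_inverse[OF y]
  note G = DERIV_comp_ln_minus_inverse[OF g_deriv[OF L] y(1)]
    and G1 = DERIV_comp_ln_minus_inverse[OF g1_deriv[OF L] y(1)]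
    and G2 = DERIV_comp_ln_minus_inverse[OF g2_deriv[OF L] y(1)]
  have ne: "2 * y \<noteq> 0" using y by simp
  show ?thesis unfolding f_lower'_def[abs_def] f_lower''_def
    by (rule derivative_eq_intros G G1 G2 ne refl)+
      (use y in \<open>simp add: field_simps power2_eq_square\<close>)
qed

lemma f_upper''_nonneg:
  assumes y: "0 < y" "y < R" and a: "\<bar>a\<bar> \<le> y"
  shows "0 \<le> f_upper'' a y"
proof -
  note L = c_less_ln_inverse[OF y]
  have "0 \<le> - 2 * g1 (ln (1/y)) * (y + a)^2"
    using g1_nonpos[OF L] by (simp add: mult_nonpos_nonneg)
  moreover have "0 \<le> g2 (ln (1/y)) * (y - a) * (4*y + 3*a)"
    using g2_nonneg[OF L] a by simp
  moreover have "0 \<le> - g3 (ln (1/y)) * ((y - a) * (2*y - a))"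
    using g3_nonpos[OF L] a by (intro mult_nonneg_nonneg) auto
  ultimately show ?thesis
    unfolding f_upper''_def using y by (intro divide_nonneg_pos) (auto simp: mult.assoc)
qed

lemma f_lower''_nonneg:
  assumes y: "y < 0" "- R < y" and a: "y \<le> - \<bar>a\<bar>"
  shows "0 \<le> f_lower'' a y"
proof -
  note L = c_less_ln_minus_inverse[OF y]
  have "0 \<le> 2 * g1 (ln (-(1/y))) * (2*y + a)"
    using g1_nonpos[OF L] a by (simp add: mult_nonpos_nonpos)
  moreover have "0 \<le> - g2 (ln (-(1/y))) * (7*y + a)"
    using g2_nonneg[OF L] a y by (simp add: mult_nonneg_nonpos)
  moreover have "0 \<le> - g3 (ln (-(1/y))) * (a - y)"
    using g3_nonpos[OF L] a by (intro mult_nonneg_nonneg) auto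
  ultimately show ?thesis
    unfolding f_lower''_def using y by (intro divide_nonneg_pos) auto
qed

lemma convex_on_f_upper:
  assumes "convex S" and "S \<subseteq> {y. \<bar>a\<bar> \<le> y \<and> 0 < y \<and> y < R}"
  shows "convex_on S (f_upper a)"
  using assms f_upper_has_derivative f_upper'_has_derivative f_upper''_nonneg
  by (intro f''_ge0_imp_convex[where f' = "f_upper' a" and f'' = "f_upper'' a"]) auto

lemma convex_on_f_lower:
  assumes "convex S" and "S \<subseteq> {y. y \<le> - \<bar>a\<bar> \<and> y < 0 \<and> - R < y}"
  shows "convex_on S (f_lower a)"
  using assms f_lower_has_derivative f_lower'_has_derivative f_lower''_nonneg
  by (intro f''_ge0_imp_convex[where f' = "f_lower' a" and f'' = "f_lower'' a"]) auto

definition f_middle' :: "real \<Rightarrow> real \<Rightarrow> real" where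
  "f_middle' a y = (if 0 < a
     then - 2 * g (ln (1/a)) + g1 (ln (1/a)) * (3*a - 2*y) / (2*a)
     else g (ln (-(1/a))) - 3/2 * g1 (ln (-(1/a))))"

lemma f_middle_has_derivative: "(f_middle a has_real_derivative f_middle' a y) (at y)"
  by (cases "0 < a")
    (auto simp: f_middle_def[abs_def] f_middle'_def field_simps intro!: derivative_eq_intros)

lemma convex_on_f_middle:
  assumes "0 < \<bar>a\<bar>" "\<bar>a\<bar> < R"
  shows "convex_on UNIV (f_middle a)"
proof (rule convex_on_realI[OF _ f_middle_has_derivative])
  fix x z :: real assume "x \<le> z"
  show "f_middle' a x \<le> f_middle' a z"
  proof (cases "0 < a")
    case True
    have "g1 (ln (1/a)) * (3*a - 2*x) \<le> g1 (ln (1/a)) * (3*a - 2*z)"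
      using g1_nonpos[OF c_less_ln_inverse] True assms \<open>x \<le> z\<close>
      by (intro mult_left_mono_neg) auto
    then show ?thesis
      using True by (simp add: f_middle'_def divide_right_mono)
  qed (simp add: f_middle'_def)
qed simp

lemma f_sep_eq_f_upper: "\<bar>a\<bar> \<le> y \<Longrightarrow> 0 < y \<Longrightarrow> f_sep g g1 (a, y) = f_upper a y"
  by (cases "\<bar>a\<bar> < y") (auto simp: f_sep_def f_base_def f_upper_def Let_def field_simps)

lemma f_sep_eq_f_lower: "y \<le> - \<bar>a\<bar> \<Longrightarrow> y < 0 \<Longrightarrow> f_sep g g1 (a, y) = f_lower a y"
  by (cases "y < - \<bar>a\<bar>") (auto simp: f_sep_def f_base_def f_lower_def Let_def field_simps)

lemma f_sep_eq_f_middle: "a \<noteq> 0 \<Longrightarrow> \<bar>y\<bar> \<le> \<bar>a\<bar> \<Longrightarrow> f_sep g g1 (a, y) = f_middle a y"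
  by (cases "0 < a") (auto simp: f_sep_def f_base_def f_middle_def Let_def)

lemma f_lower'_le_f_middle':
  assumes "0 < \<bar>a\<bar>" "\<bar>a\<bar> < R"
  shows "f_lower' a (- \<bar>a\<bar>) \<le> f_middle' a (- \<bar>a\<bar>)"
proof (cases "0 < a")
  case True
  note L = c_less_ln_inverse[of a]
  show ?thesis
    using True assms g1_nonpos[OF L] g2_nonneg[OF L]
    by (simp add: f_lower'_def f_middle'_def field_simps)
next
  case False
  note L = c_less_ln_minus_inverse[of a]
  show ?thesis
    using False assms g_nonneg[OF L] g1_nonpos[OF L]
    by (simp add: f_lower'_def f_middle'_def field_simps)
qed

lemma f_middle'_le_f_upper':
  assumes "0 < \<bar>a\<bar>" "\<bar>a\<bar> < R"
  shows "f_middle' a \<bar>a\<bar> \<le> f_upper' a \<bar>a\<bar>"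
proof (cases "0 < a")
  case True
  note L = c_less_ln_inverse[of a]
  show ?thesis
    using True assms g_nonneg[OF L]
    by (simp add: f_upper'_def f_middle'_def field_simps power2_eq_square)
next
  case False
  note L = c_less_ln_minus_inverse[of a]
  show ?thesis
    using False assms g1_nonpos[OF L] g2_nonneg[OF L]
    by (simp add: f_upper'_def f_middle'_def field_simps power2_eq_square)
qed

lemma g_g1_combination_antimono:
  assumes "c < s" "s \<le> t" "0 \<le> \<alpha>" "0 \<le> \<beta>"
  shows "\<alpha> * g t - \<beta> * g1 t \<le> \<alpha> * g s - \<beta> * g1 s"
proof -
  have "g t \<le> g s"
    by (rule DERIV_nonpos_imp_nonincreasing[OF assms(2)])
      (metis assms(1) g_deriv g1_nonpos order_less_le_trans)
  moreover have "g1 s \<le> g1 t"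
    by (rule DERIV_nonneg_imp_nondecreasing[OF assms(2)])
      (metis assms(1) g1_deriv g2_nonneg order_less_le_trans)
  ultimately show ?thesis
    using assms(3,4) by (smt (verit) mult_left_mono)
qed

lemma f_upper_zero: "y \<noteq> 0 \<Longrightarrow> f_upper 0 y = y * (g (ln (1/y)) - g1 (ln (1/y)))"
  by (simp add: f_upper_def field_simps)

lemma f_lower_zero: "f_lower 0 y = - y * (2 * g (ln (-(1/y))) - 3/2 * g1 (ln (-(1/y))))"
  by (simp add: f_lower_def field_simps)

lemma f_upper_zero_nonneg:
  assumes "0 < y" "y < R"
  shows "0 \<le> f_upper 0 y"
  using assms g_nonneg[OF c_less_ln_inverse[OF assms]] g1_nonpos[OF c_less_ln_inverse[OF assms]]
  by (simp add: f_upper_zero)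

lemma f_lower_zero_nonneg:
  assumes "y < 0" "- R < y"
  shows "0 \<le> f_lower 0 y"
  using assms g_nonneg[OF c_less_ln_minus_inverse[OF assms]]
    g1_nonpos[OF c_less_ln_minus_inverse[OF assms]]
  by (auto simp: f_lower_zero intro!: mult_nonpos_nonneg)

lemma f_upper_zero_scale:
  assumes z: "0 < z" "z < R" and t: "0 < t" "t \<le> 1"
  shows "f_upper 0 (t * z) \<le> t * f_upper 0 z"
proof -
  have "ln (1/z) \<le> ln (1/(t * z))"
    using z t by (simp add: ln_div ln_mult)
  from g_g1_combination_antimono[OF c_less_ln_inverse[OF z] this, of 1 1]
  have "t * z * (g (ln (1/(t*z))) - g1 (ln (1/(t*z)))) \<le> t * z * (g (ln (1/z)) - g1 (ln (1/z)))"
    using z t by (intro mult_left_mono) auto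
  then show ?thesis
    using z t by (simp add: f_upper_zero mult.assoc)
qed

lemma f_lower_zero_scale:
  assumes z: "z < 0" "- R < z" and t: "0 < t" "t \<le> 1"
  shows "f_lower 0 (t * z) \<le> t * f_lower 0 z"
proof -
  have tz: "t * z < 0"
    using z t by (simp add: mult_pos_neg)
  have "- (1/z) \<le> - (1/(t * z))"
    using z t by (simp add: field_simps mult_le_cancel_right1)
  then have "ln (-(1/z)) \<le> ln (-(1/(t * z)))"
    using z tz by (subst ln_le_cancel_iff) auto
  from g_g1_combination_antimono[OF c_less_ln_minus_inverse[OF z] this, of 2 "3/2"]
  have "- (t * z) * (2 * g (ln (-(1/(t*z)))) - 3/2 * g1 (ln (-(1/(t*z)))))
      \<le> - (t * z) * (2 * g (ln (-(1/z))) - 3/2 * g1 (ln (-(1/z))))"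
    using tz by (intro mult_left_mono) auto
  then show ?thesis
    by (simp add: f_lower_zero mult.assoc)
qed

lemma convex_on_vertical_line_lower_part:
  assumes a: "0 < \<bar>a\<bar>" "\<bar>a\<bar> < R"
  shows "convex_on {-R<..\<bar>a\<bar>} (\<lambda>y. f_sep g g1 (a, y))" (is "convex_on _ ?h")
proof (rule convex_on_glue_one_sided_derivatives[where q = "- \<bar>a\<bar>"])
  have "convex_on {-R<..-\<bar>a\<bar>} ?h"
    by (rule convex_on_eq[OF convex_on_f_lower]) (use a in \<open>auto simp: f_sep_eq_f_lower\<close>)
  moreover have "convex_on {-\<bar>a\<bar>..\<bar>a\<bar>} ?h"
    by (rule convex_on_eq[OF convex_on_subset[OF convex_on_f_middle[OF a]]])
      (use a in \<open>auto simp: f_sep_eq_f_middle\<close>)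
  moreover have "{-R<..\<bar>a\<bar>} \<inter> {..-\<bar>a\<bar>} = {-R<..-\<bar>a\<bar>}" "{-R<..\<bar>a\<bar>} \<inter> {-\<bar>a\<bar>..} = {-\<bar>a\<bar>..\<bar>a\<bar>}"
    using a by auto
  ultimately show "convex_on ({-R<..\<bar>a\<bar>} \<inter> {..-\<bar>a\<bar>}) ?h" "convex_on ({-R<..\<bar>a\<bar>} \<inter> {-\<bar>a\<bar>..}) ?h"
    by simp_all
  show "(?h has_real_derivative f_lower' a (-\<bar>a\<bar>)) (at_left (-\<bar>a\<bar>))"
    by (rule DERIV_at_left_transform[OF f_lower_has_derivative, where p = "-R"])
      (use a in \<open>auto simp: f_sep_eq_f_lower\<close>)
  show "(?h has_real_derivative f_middle' a (-\<bar>a\<bar>)) (at_right (-\<bar>a\<bar>))"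
    by (rule DERIV_at_right_transform[OF f_middle_has_derivative, where p = "\<bar>a\<bar>"])
      (use a in \<open>auto simp: f_sep_eq_f_middle\<close>)
  show "f_lower' a (-\<bar>a\<bar>) \<le> f_middle' a (-\<bar>a\<bar>)"
    using f_lower'_le_f_middle'[OF a] .
qed (use a in auto)

lemma convex_on_vertical_line_nonzero:
  assumes a: "0 < \<bar>a\<bar>" "\<bar>a\<bar> < R"
  shows "convex_on {-R<..<R} (\<lambda>y. f_sep g g1 (a, y))" (is "convex_on _ ?h")
proof (rule convex_on_glue_one_sided_derivatives[where q = "\<bar>a\<bar>"])
  have "convex_on {\<bar>a\<bar>..<R} ?h"
    by (rule convex_on_eq[OF convex_on_f_upper]) (use a in \<open>auto simp: f_sep_eq_f_upper\<close>)
  moreover have "{-R<..<R} \<inter> {..\<bar>a\<bar>} = {-R<..\<bar>a\<bar>}" "{-R<..<R} \<inter> {\<bar>a\<bar>..} = {\<bar>a\<bar>..<R}"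
    using a by auto
  ultimately show "convex_on ({-R<..<R} \<inter> {..\<bar>a\<bar>}) ?h" "convex_on ({-R<..<R} \<inter> {\<bar>a\<bar>..}) ?h"
    using convex_on_vertical_line_lower_part[OF a] by simp_all
  show "(?h has_real_derivative f_middle' a \<bar>a\<bar>) (at_left \<bar>a\<bar>)"
    by (rule DERIV_at_left_transform[OF f_middle_has_derivative, where p = "-\<bar>a\<bar>"])
      (use a in \<open>auto simp: f_sep_eq_f_middle\<close>)
  show "(?h has_real_derivative f_upper' a \<bar>a\<bar>) (at_right \<bar>a\<bar>)"
    by (rule DERIV_at_right_transform[OF f_upper_has_derivative, where p = R])
      (use a in \<open>auto simp: f_sep_eq_f_upper\<close>)
  show "f_middle' a \<bar>a\<bar> \<le> f_upper' a \<bar>a\<bar>"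
    using f_middle'_le_f_upper'[OF a] .
qed (use a in auto)

lemma convex_on_vertical_line_zero:
  "convex_on {-R<..<R} (\<lambda>y. f_sep g g1 (0, y))" (is "convex_on _ ?h")
proof -
  have upper: "?h y = f_upper 0 y" if "0 < y" for y
    using that by (simp add: f_sep_eq_f_upper)
  have lower: "?h y = f_lower 0 y" if "y < 0" for y
    using that by (simp add: f_sep_eq_f_lower)
  have zero: "?h 0 = 0"
    by (simp add: f_sep_def f_base_def)
  have pieces: "insert 0 {0<..<R} = {-R<..<R} \<inter> {0..}" "insert 0 {-R<..<0} = {-R<..<R} \<inter> {..0}"
    by auto
  have right: "convex_on (insert 0 {0<..<R}) ?h"
  proof (rule convex_on_insert)
    show "convex_on {0<..<R} ?h"
      by (rule convex_on_eq[OF convex_on_f_upper]) (auto simp: upper)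
    show "?h ((1 - t) *\<^sub>R 0 + t *\<^sub>R z) \<le> (1 - t) * ?h 0 + t * ?h z"
      if "z \<in> {0<..<R}" "0 < t" "t < 1" for z t
      using that f_upper_zero_scale[of z t] by (simp add: upper zero)
  qed (simp only: pieces convex_Int convex_real_interval)
  have left: "convex_on (insert 0 {-R<..<0}) ?h"
  proof (rule convex_on_insert)
    show "convex_on {-R<..<0} ?h"
      by (rule convex_on_eq[OF convex_on_f_lower]) (auto simp: lower)
    show "?h ((1 - t) *\<^sub>R 0 + t *\<^sub>R z) \<le> (1 - t) * ?h 0 + t * ?h z"
      if "z \<in> {-R<..<0}" "0 < t" "t < 1" for z t
      using that f_lower_zero_scale[of z t] by (simp add: lower zero mult_pos_neg)
  qed (simp only: pieces convex_Int convex_real_interval)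
  show ?thesis
  proof (rule convex_on_glue_supporting_line[where q = 0 and m = 0])
    show "convex_on ({-R<..<R} \<inter> {..0}) ?h" "convex_on ({-R<..<R} \<inter> {0..}) ?h"
      using left right by (simp_all only: pieces)
    show "?h 0 + 0 * (x - 0) \<le> ?h x" if "x \<in> {-R<..<R}" for x
      using that f_upper_zero_nonneg[of x] f_lower_zero_nonneg[of x]
      by (cases x "0 :: real" rule: linorder_cases) (auto simp: zero upper lower)
  qed auto
qed

lemma convex_on_vertical_line:
  "\<bar>a\<bar> < R \<Longrightarrow> convex_on {-R<..<R} (\<lambda>y. f_sep g g1 (a, y))"
  using convex_on_vertical_line_nonzero convex_on_vertical_line_zero by (cases "a = 0") auto

lemma separately_convex_on_f_sep:
  "separately_convex_on ({-R<..<R} \<times> {-R<..<R}) (f_sep g g1)"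
  using convex_on_vertical_line by (intro separately_convex_onI) (auto simp: f_sep_commute)

end

theorem proposition8p1:
  fixes c :: real and g g1 g2 g3 :: "real \<Rightarrow> real"
  assumes d1: "\<And>t. t > c \<Longrightarrow> (g has_real_derivative g1 t) (at t)"
      and d2: "\<And>t. t > c \<Longrightarrow> (g1 has_real_derivative g2 t) (at t)"
      and d3: "\<And>t. t > c \<Longrightarrow> (g2 has_real_derivative g3 t) (at t)"
      and s0: "\<And>t. t > c \<Longrightarrow> g t \<ge> 0"
      and s1: "\<And>t. t > c \<Longrightarrow> g1 t \<le> 0"
      and s2: "\<And>t. t > c \<Longrightarrow> g2 t \<ge> 0"
      and s3: "\<And>t. t > c \<Longrightarrow> g3 t \<le> 0"
  shows "separately_convex_on ({-exp (-c)<..<exp (-c)} \<times> {-exp (-c)<..<exp (-c)}) (f_sep g g1)"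
proof -
  interpret alternating_derivatives c g g1 g2 g3
    using assms by unfold_locales auto
  show ?thesis
    by (rule separately_convex_on_f_sep)
qed

end
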